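(* There are absolute constants $c_1,C_1>0$ such that for every $d\in\mathbb N$, every finite nonempty set $Q\subset\mathbb Z^d$, every measurable set $B\subset\mathbb T^d$ with $|B|\le c_1|Q|^{-1}$, and every $f\in\mathcal T(Q)$, $$ \|f\|_{L_\infty(\mathbb T^d)}\le C_1|Q|^{1/2}\|f\|_{L_\infty(\mathbb T^d\setminus B)}. $$
   Context: $\mathbb T^d=[0,2\pi)^d$ (the $d$-dimensional torus), $|B|$ denotes the normalized Lebesgue measure $(2\pi)^{-d}\lambda(B)$ of $B$, and $|Q|$ is the cardinality of $Q$. $\mathcal T(Q)=\{f(\mathbf x)=\sum_{\mathbf k\in Q}c_{\mathbf k}e^{i(\mathbf k,\mathbf x)}: c_{\mathbf k}\in\mathbb C\}$. $\|f\|_{L_\infty(S)}=\sup_{\mathbf x\in S}|f(\mathbf x)|$. *)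

theory Defs
  imports "HOL-Probability.Probability"
begin

text \<open>Points of the d-dimensional torus [0,2pi)^d are represented as extensional
functions nat => real with coordinates indexed by {..<d}.\<close>
definition torus :: "nat \<Rightarrow> (nat \<Rightarrow> real) set" where
  "torus d = PiE {..<d} (\<lambda>_. {0..<2*pi})"

definition lebesgue_d :: "nat \<Rightarrow> (nat \<Rightarrow> real) measure" where
  "lebesgue_d d = completion (PiM {..<d} (\<lambda>_. lborel))"

definition norm_meas :: "nat \<Rightarrow> (nat \<Rightarrow> real) set \<Rightarrow> real" where
  "norm_meas d B = measure (lebesgue_d d) B / (2*pi)^d"

definition lattice :: "nat \<Rightarrow> (nat \<Rightarrow> int) set" where
  "lattice d = {k. \<forall>i\<ge>d. k i = 0}"

definition trig_poly :: "nat \<Rightarrow> (nat \<Rightarrow> int) set \<Rightarrow> ((nat \<Rightarrow> int) \<Rightarrow> complex)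
    \<Rightarrow> (nat \<Rightarrow> real) \<Rightarrow> complex" where
  "trig_poly d Q c x = (\<Sum>k\<in>Q. c k * exp (\<i> * complex_of_real (\<Sum>j<d. real_of_int (k j) * x j)))"

definition sup_norm :: "((nat \<Rightarrow> real) \<Rightarrow> complex) \<Rightarrow> (nat \<Rightarrow> real) set \<Rightarrow> real" where
  "sup_norm f S = (SUP x\<in>S. cmod (f x))"

end

theory Submission
  imports Defs
begin

(* By Parseval, the integral of |f|^2 over the torus is (2 pi)^d * sum_k |c_k|^2, while
   Cauchy-Schwarz gives ||f||_oo^2 <= (sum_k |c_k|)^2 <= |Q| * sum_k |c_k|^2.  Bounding |f| by
   ||f||_oo on B and by m = ||f||_{L_oo(T - B)} off B inside the Parseval integral yields
   sum_k |c_k|^2 <= |B| ||f||_oo^2 + m^2.  So if |B| <= 1/(2|Q|), then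
   ||f||_oo^2 <= ||f||_oo^2 / 2 + |Q| m^2, i.e. the theorem holds with c1 = 1/2, C1 = sqrt 2. *)

lemma set_integrable_exp_int:
  fixes n :: int
  shows "set_integrable lborel {0..<2*pi} (\<lambda>t. exp (\<i> * of_int n * of_real t))"
  by (rule set_integrable_subset[of _ "{0..2*pi}"])
     (auto intro!: borel_integrable_atLeastAtMost' continuous_intros)

lemma set_integral_exp_int:
  fixes n :: int
  shows "(LBINT t:{0..<2*pi}. exp (\<i> * of_int n * of_real t)) = (if n = 0 then 2*pi else 0)"
proof -
  define F where
    "F t = (if n = 0 then of_real t else exp (\<i> * of_int n * of_real t) / (\<i> * of_int n))"
    for t :: real
  have "(LBINT t:{0..<2*pi}. exp (\<i> * of_int n * of_real t))
      = (LBINT t=ereal 0..ereal (2*pi). exp (\<i> * of_int n * of_real t))"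
    by (subst interval_integral_Ico) auto
  also have "\<dots> = F (2*pi) - F 0"
  proof (rule interval_integral_FTC_finite)
    fix t :: real
    have "((\<lambda>z. if n = 0 then z else exp (\<i> * of_int n * z) / (\<i> * of_int n))
        has_field_derivative exp (\<i> * of_int n * of_real t)) (at (of_real t))"
      by (cases "n = 0") (auto intro!: derivative_eq_intros)
    then show "(F has_vector_derivative exp (\<i> * of_int n * of_real t))
        (at t within {min 0 (2*pi)..max 0 (2*pi)})"
      unfolding F_def by (rule has_vector_derivative_real_field)
  qed (intro continuous_intros)
  also have "\<dots> = (if n = 0 then 2*pi else 0)"
    using exp_integer_2pi[of "of_int n"] by (simp add: F_def algebra_simps)
  finally show ?thesis .
qed

lemma set_integrable_sum:
  fixes f :: "'i \<Rightarrow> 'a \<Rightarrow> 'b::{banach, second_countable_topology}"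
  assumes "\<And>i. i \<in> I \<Longrightarrow> set_integrable M A (f i)"
  shows "set_integrable M A (\<lambda>x. \<Sum>i\<in>I. f i x)"
  using assms unfolding set_integrable_def by (simp add: scaleR_sum_right)

lemma set_integral_sum:
  fixes f :: "'i \<Rightarrow> 'a \<Rightarrow> 'b::{banach, second_countable_topology}"
  assumes "\<And>i. i \<in> I \<Longrightarrow> set_integrable M A (f i)"
  shows "(LINT x:A|M. \<Sum>i\<in>I. f i x) = (\<Sum>i\<in>I. LINT x:A|M. f i x)"
  using assms unfolding set_integrable_def set_lebesgue_integral_def scaleR_sum_right
  by (rule Bochner_Integration.integral_sum)

lemma set_integral_square_le_split:
  fixes g :: "'a \<Rightarrow> real"
  assumes integrable: "set_integrable M T (\<lambda>x. (g x)^2)"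
    and T: "T \<in> sets M" "emeasure M T < \<infinity>"
    and B: "B \<in> sets M" "B \<subseteq> T"
    and bound_B: "\<And>x. x \<in> B \<Longrightarrow> \<bar>g x\<bar> \<le> a"
    and bound_off_B: "\<And>x. x \<in> T - B \<Longrightarrow> \<bar>g x\<bar> \<le> b"
  shows "(LINT x:T|M. (g x)^2) \<le> a^2 * measure M B + b^2 * measure M T"
proof -
  have B_finite: "emeasure M B < \<infinity>"
    using emeasure_mono[OF B(2) T(1)] T(2) by simp
  have "(LINT x:T|M. (g x)^2) \<le> (\<integral>x. a^2 * indicator B x + b^2 * indicator T x \<partial>M)"
    unfolding set_lebesgue_integral_def
  proof (rule integral_mono)
    show "integrable M (\<lambda>x. a^2 * indicator B x + b^2 * indicator T x)"
      using B(1) B_finite T by simp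
    fix x
    have "(g x)^2 \<le> a^2" if "x \<in> B"
      using power_mono[OF bound_B[OF that] abs_ge_zero, of 2] by simp
    moreover have "(g x)^2 \<le> b^2" if "x \<in> T - B"
      using power_mono[OF bound_off_B[OF that] abs_ge_zero, of 2] by simp
    ultimately show "indicator T x *\<^sub>R (g x)^2 \<le> a^2 * indicator B x + b^2 * indicator T x"
      using B(2) by (auto simp: indicator_def add_increasing2)
  qed (use integrable in \<open>simp add: set_integrable_def\<close>)
  also have "\<dots> = a^2 * measure M B + b^2 * measure M T"
    using B(1) B_finite T by simp
  finally show ?thesis .
qed

lemma norm_le_sup_norm:
  assumes "bdd_above ((\<lambda>x. cmod (f x)) ` S)" "x \<in> S"
  shows "cmod (f x) \<le> sup_norm f S"
  unfolding sup_norm_def using assms by (rule cSUP_upper2) simp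

lemma sup_norm_le:
  assumes "S \<noteq> {}" "\<And>x. x \<in> S \<Longrightarrow> cmod (f x) \<le> b"
  shows "sup_norm f S \<le> b"
  unfolding sup_norm_def using assms by (rule cSUP_least)

lemma sup_norm_nonneg:
  assumes "bdd_above ((\<lambda>x. cmod (f x)) ` S)" "S \<noteq> {}"
  shows "0 \<le> sup_norm f S"
  using assms norm_le_sup_norm[OF assms(1)] by (meson ex_in_conv norm_ge_zero order_trans)

abbreviation product_lborel :: "nat \<Rightarrow> (nat \<Rightarrow> real) measure" where
  "product_lborel d \<equiv> PiM {..<d} (\<lambda>_. lborel)"

lemma indicator_torus_eq_prod:
  assumes "x \<in> space (product_lborel d)"
  shows "indicator (torus d) x = (\<Prod>j<d. indicator {0..<2*pi} (x j) :: real)"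
  using assms by (auto simp: indicator_def torus_def PiE_iff space_PiM)

lemma sets_torus_product_lborel: "torus d \<in> sets (product_lborel d)"
  unfolding torus_def by (rule sets_PiM_I_finite) auto

lemma sets_torus: "torus d \<in> sets (lebesgue_d d)"
  unfolding lebesgue_d_def by (rule sets_completionI_sets) (rule sets_torus_product_lborel)

lemma emeasure_torus: "emeasure (lebesgue_d d) (torus d) = ennreal ((2*pi)^d)"
proof -
  interpret product_sigma_finite "\<lambda>_::nat. lborel"
    by (simp add: product_sigma_finite_def sigma_finite_lborel)
  have "emeasure (product_lborel d) (torus d) = (\<Prod>j<d. emeasure lborel {0..<2*pi})"
    unfolding torus_def by (rule emeasure_PiM) auto
  then show ?thesis
    using sets_torus_product_lborel by (simp add: lebesgue_d_def prod_ennreal ennreal_power)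
qed

lemma measure_torus: "measure (lebesgue_d d) (torus d) = (2*pi)^d"
  by (simp add: measure_def emeasure_torus)

lemma torus_nonempty: "torus d \<noteq> {}"
  unfolding torus_def by (auto simp: PiE_eq_empty_iff)

definition torus_char :: "nat \<Rightarrow> (nat \<Rightarrow> int) \<Rightarrow> (nat \<Rightarrow> real) \<Rightarrow> complex" where
  "torus_char d k x = exp (\<i> * of_real (\<Sum>j<d. real_of_int (k j) * x j))"

lemma torus_char_mult_cnj:
  "torus_char d k x * cnj (torus_char d l x) = torus_char d (\<lambda>j. k j - l j) x"
  by (simp add: torus_char_def exp_cnj mult_exp_exp sum_subtractf algebra_simps)

lemma indicator_torus_scaleR_torus_char:
  assumes "x \<in> space (product_lborel d)"
  shows "indicator (torus d) x *\<^sub>R torus_char d k x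
       = (\<Prod>j<d. indicator {0..<2*pi} (x j) *\<^sub>R exp (\<i> * of_int (k j) * of_real (x j)))"
  using assms
  by (simp add: indicator_torus_eq_prod torus_char_def scaleR_conv_of_real prod.distrib
      sum_distrib_left exp_sum mult.assoc)

lemma
  shows set_integrable_torus_char: "set_integrable (lebesgue_d d) (torus d) (torus_char d k)"
    and set_integral_torus_char:
      "(LINT x:torus d|lebesgue_d d. torus_char d k x) = (if \<forall>j<d. k j = 0 then (2*pi)^d else 0)"
proof -
  interpret product_sigma_finite "\<lambda>_::nat. lborel"
    by (simp add: product_sigma_finite_def sigma_finite_lborel)
  define F where "F j t = indicator {0..<2*pi} t *\<^sub>R exp (\<i> * of_int (k j) * of_real t)" for j t
  have F_integrable: "integrable lborel (F j)" for j
    using set_integrable_exp_int unfolding F_def set_integrable_def .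
  have measurable: "(\<lambda>x. indicator (torus d) x *\<^sub>R torus_char d k x) \<in> borel_measurable (product_lborel d)"
    using sets_torus_product_lborel unfolding torus_char_def by measurable
  have pointwise: "indicator (torus d) x *\<^sub>R torus_char d k x = (\<Prod>j<d. F j (x j))"
    if "x \<in> space (product_lborel d)" for x
    using that by (simp add: F_def indicator_torus_scaleR_torus_char)
  have factor_integrable: "integrable (lebesgue_d d) (\<lambda>x. indicator (torus d) x *\<^sub>R torus_char d k x)
      \<longleftrightarrow> integrable (product_lborel d) (\<lambda>x. \<Prod>j<d. F j (x j))"
    unfolding lebesgue_d_def integrable_completion[OF measurable]
    by (rule Bochner_Integration.integrable_cong[OF refl pointwise])
  have factor_integral: "(\<integral>x. indicator (torus d) x *\<^sub>R torus_char d k x \<partial>lebesgue_d d)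
      = (\<integral>x. (\<Prod>j<d. F j (x j)) \<partial>product_lborel d)"
    unfolding lebesgue_d_def integral_completion[OF measurable]
    by (rule Bochner_Integration.integral_cong[OF refl pointwise])
  show "set_integrable (lebesgue_d d) (torus d) (torus_char d k)"
    unfolding set_integrable_def factor_integrable by (intro product_integrable_prod F_integrable) auto
  have "(LINT x:torus d|lebesgue_d d. torus_char d k x) = (\<Prod>j<d. \<integral>t. F j t \<partial>lborel)"
    unfolding set_lebesgue_integral_def factor_integral by (intro product_integral_prod F_integrable) auto
  also have "\<dots> = (\<Prod>j<d. if k j = 0 then 2*pi else 0)"
    using set_integral_exp_int by (simp add: F_def set_lebesgue_integral_def)
  also have "\<dots> = (if \<forall>j<d. k j = 0 then (2*pi)^d else 0)"
    by (auto intro: prod_zero)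
  finally show "(LINT x:torus d|lebesgue_d d. torus_char d k x) = (if \<forall>j<d. k j = 0 then (2*pi)^d else 0)" .
qed

lemma lattice_eq_iff_eq_on_lessThan:
  assumes "k \<in> lattice d" "l \<in> lattice d"
  shows "(\<forall>j<d. k j = l j) \<longleftrightarrow> k = l"
proof
  assume eq: "\<forall>j<d. k j = l j"
  show "k = l"
  proof
    fix j
    show "k j = l j"
      using eq assms by (cases "j < d") (auto simp: lattice_def)
  qed
qed simp

lemma trig_poly_eq_sum_torus_char: "trig_poly d Q c x = (\<Sum>k\<in>Q. c k * torus_char d k x)"
  by (simp add: trig_poly_def torus_char_def)

lemma norm_trig_poly_square_eq:
  "complex_of_real ((cmod (trig_poly d Q c x))^2)
     = (\<Sum>k\<in>Q. \<Sum>l\<in>Q. c k * cnj (c l) * torus_char d (\<lambda>j. k j - l j) x)"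
  unfolding complex_norm_square trig_poly_eq_sum_torus_char cnj_sum sum_product
  by (simp add: torus_char_mult_cnj[symmetric] mult_ac)

lemma
  assumes "finite Q" "Q \<subseteq> lattice d"
  shows set_integrable_norm_trig_poly_square:
      "set_integrable (lebesgue_d d) (torus d) (\<lambda>x. (cmod (trig_poly d Q c x))^2)"
    and parseval_trig_poly:
      "(LINT x:torus d|lebesgue_d d. (cmod (trig_poly d Q c x))^2) = (2*pi)^d * (\<Sum>k\<in>Q. (cmod (c k))^2)"
proof -
  have summands: "set_integrable (lebesgue_d d) (torus d)
      (\<lambda>x. c k * cnj (c l) * torus_char d (\<lambda>j. k j - l j) x)" for k l
    by (intro set_integrable_mult_right set_integrable_torus_char)
  have "set_integrable (lebesgue_d d) (torus d) (\<lambda>x. complex_of_real ((cmod (trig_poly d Q c x))^2))"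
    unfolding norm_trig_poly_square_eq by (intro set_integrable_sum summands)
  then show "set_integrable (lebesgue_d d) (torus d) (\<lambda>x. (cmod (trig_poly d Q c x))^2)"
    unfolding set_integrable_def complex_of_real_integrable_eq[symmetric]
    by (simp only: scaleR_conv_of_real of_real_mult of_real_eq_id id_apply)
  have "complex_of_real (LINT x:torus d|lebesgue_d d. (cmod (trig_poly d Q c x))^2)
      = (\<Sum>k\<in>Q. \<Sum>l\<in>Q.
           c k * cnj (c l) * (LINT x:torus d|lebesgue_d d. torus_char d (\<lambda>j. k j - l j) x))"
    unfolding set_integral_complex_of_real[symmetric] norm_trig_poly_square_eq
    using summands by (simp add: set_integral_sum set_integrable_sum)
  also have "\<dots> = (\<Sum>k\<in>Q. \<Sum>l\<in>Q. if l = k then c k * cnj (c l) * (2*pi)^d else 0)"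
    using assms(2) by (intro sum.cong refl)
      (auto simp: set_integral_torus_char lattice_eq_iff_eq_on_lessThan subsetD)
  also have "\<dots> = complex_of_real ((2*pi)^d * (\<Sum>k\<in>Q. (cmod (c k))^2))"
    using assms(1) by (simp add: complex_norm_square sum_distrib_left mult_ac del: of_real_power)
  finally show "(LINT x:torus d|lebesgue_d d. (cmod (trig_poly d Q c x))^2) = (2*pi)^d * (\<Sum>k\<in>Q. (cmod (c k))^2)"
    using of_real_eq_iff by blast
qed

lemma norm_trig_poly_le: "cmod (trig_poly d Q c x) \<le> (\<Sum>k\<in>Q. cmod (c k))"
  unfolding trig_poly_def by (rule order_trans[OF norm_sum]) (simp add: norm_mult)

lemma bdd_above_norm_trig_poly: "bdd_above ((\<lambda>x. cmod (trig_poly d Q c x)) ` S)"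
  by (rule bdd_aboveI2) (rule norm_trig_poly_le)

lemma sup_norm_trig_poly_square_le:
  assumes "S \<noteq> {}"
  shows "(sup_norm (trig_poly d Q c) S)^2 \<le> card Q * (\<Sum>k\<in>Q. (cmod (c k))^2)"
proof -
  have "(sup_norm (trig_poly d Q c) S)^2 \<le> (\<Sum>k\<in>Q. cmod (c k))^2"
    using assms
    by (intro power_mono sup_norm_le sup_norm_nonneg norm_trig_poly_le bdd_above_norm_trig_poly)
  also have "\<dots> \<le> card Q * (\<Sum>k\<in>Q. (cmod (c k))^2)"
    using sum_squared_le_sum_of_squares[of "\<lambda>k. cmod (c k)" Q] by (simp add: mult.commute)
  finally show ?thesis .
qed

lemma parseval_trig_poly_le_split:
  assumes "finite Q" "Q \<subseteq> lattice d" "B \<in> sets (lebesgue_d d)" "B \<subseteq> torus d"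
  shows "(2*pi)^d * (\<Sum>k\<in>Q. (cmod (c k))^2)
    \<le> (sup_norm (trig_poly d Q c) (torus d))^2 * measure (lebesgue_d d) B
      + (sup_norm (trig_poly d Q c) (torus d - B))^2 * (2*pi)^d"
proof -
  have "(2*pi)^d * (\<Sum>k\<in>Q. (cmod (c k))^2)
      = (LINT x:torus d|lebesgue_d d. (cmod (trig_poly d Q c x))^2)"
    by (rule parseval_trig_poly[OF assms(1,2), symmetric])
  also have "\<dots> \<le> (sup_norm (trig_poly d Q c) (torus d))^2 * measure (lebesgue_d d) B
      + (sup_norm (trig_poly d Q c) (torus d - B))^2 * measure (lebesgue_d d) (torus d)"
    using assms
    by (intro set_integral_square_le_split set_integrable_norm_trig_poly_square sets_torus)
      (auto simp: emeasure_torus intro: norm_le_sup_norm bdd_above_norm_trig_poly)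
  finally show ?thesis
    by (simp only: measure_torus)
qed

lemma sup_norm_trig_poly_le_sup_norm_off_small_set:
  assumes Q: "finite Q" "Q \<noteq> {}" "Q \<subseteq> lattice d"
    and B: "B \<in> sets (lebesgue_d d)" "B \<subseteq> torus d"
    and small: "norm_meas d B \<le> (1/2) / real (card Q)"
  shows "sup_norm (trig_poly d Q c) (torus d)
         \<le> sqrt 2 * sqrt (real (card Q)) * sup_norm (trig_poly d Q c) (torus d - B)"
proof -
  define n where "n = real (card Q)"
  define M where "M = sup_norm (trig_poly d Q c) (torus d)"
  define m where "m = sup_norm (trig_poly d Q c) (torus d - B)"
  define S where "S = (\<Sum>k\<in>Q. (cmod (c k))^2)"
  have "card Q > 0"
    using Q by (simp add: card_gt_0_iff)
  then have n: "n \<ge> 1"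
    by (simp add: n_def)
  have "torus d - B \<noteq> {}" \<comment> \<open>otherwise m would be the junk value Sup {}\<close>
  proof
    assume "torus d - B = {}"
    then have "B = torus d"
      using B(2) by blast
    then have "norm_meas d B = 1"
      by (simp add: norm_meas_def measure_torus)
    with small n show False
      by (simp add: n_def field_simps)
  qed
  then have m: "0 \<le> m"
    unfolding m_def by (rule sup_norm_nonneg[OF bdd_above_norm_trig_poly])
  have "(2*pi)^d * S \<le> M^2 * measure (lebesgue_d d) B + m^2 * (2*pi)^d"
    unfolding M_def m_def S_def by (rule parseval_trig_poly_le_split[OF Q(1,3) B])
  moreover have "measure (lebesgue_d d) B \<le> (2*pi)^d / (2 * n)"
    using small by (simp add: norm_meas_def n_def field_simps)
  ultimately have "(2*pi)^d * S \<le> (2*pi)^d * (M^2 / (2 * n) + m^2)"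
    using mult_left_mono[of _ _ "M^2"] by (fastforce simp: algebra_simps)
  then have "S \<le> M^2 / (2 * n) + m^2"
    by simp
  moreover have "M^2 \<le> n * S"
    unfolding M_def n_def S_def by (rule sup_norm_trig_poly_square_le[OF torus_nonempty])
  ultimately have "M^2 \<le> (sqrt 2 * sqrt n * m)^2"
    using n by (simp add: power_mult_distrib field_simps)
  then have "M \<le> sqrt 2 * sqrt n * m"
    by (rule power2_le_imp_le) (use m n in simp)
  then show ?thesis
    by (simp only: M_def m_def n_def)
qed

theorem theorem5p2:
  shows "\<exists>c1>0. \<exists>C1>0. \<forall>(d::nat) (Q::(nat \<Rightarrow> int) set) (B::(nat \<Rightarrow> real) set)
           (c::(nat \<Rightarrow> int) \<Rightarrow> complex).
     finite Q \<and> Q \<noteq> {} \<and> Q \<subseteq> lattice d \<and>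
     B \<subseteq> torus d \<and> B \<in> sets (lebesgue_d d) \<and>
     norm_meas d B \<le> c1 / real (card Q)
     \<longrightarrow> sup_norm (trig_poly d Q c) (torus d)
         \<le> C1 * sqrt (real (card Q)) * sup_norm (trig_poly d Q c) (torus d - B)"
  by (intro exI[of _ "1/2"] exI[of _ "sqrt 2"] conjI allI impI)
     (auto intro!: sup_norm_trig_poly_le_sup_norm_off_small_set)

end
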